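(* Let $h:X\to X$ be a minimal homeomorphism of a compact connected Hausdorff space $X$ and let $\chi$ be an eigenfunction of $h$ whose image contains more than one point. Then $\chi$ is surjective.
   Context: An eigenfunction of $h$ is a continuous map $\chi:X\to\mathbb{R}/\mathbb{Z}$ such that $\chi\circ h=R_\alpha\circ\chi$ for some $\alpha\in\mathbb{R}/\mathbb{Z}$, where $R_\alpha(x)=x+\alpha$ is the rotation by $\alpha$. *)

theory Defs
  imports "HOL-Analysis.Analysis"
begin

text \<open>The circle R/Z, realised as the unit circle in the complex plane via
  t mod 1 maps to exp(2 pi i t). Rotation by alpha is multiplication by cis(2 pi alpha).\<close>

definition circleRZ :: "complex set" where
  "circleRZ = sphere 0 1"

definition rotRZ :: "real \<Rightarrow> complex \<Rightarrow> complex" where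
  "rotRZ \<alpha> z = cis (2 * pi * \<alpha>) * z"

definition minimal_homeo :: "'a topology \<Rightarrow> ('a \<Rightarrow> 'a) \<Rightarrow> bool" where
  "minimal_homeo X h \<longleftrightarrow> homeomorphic_map X X h \<and>
     (\<forall>A. closedin X A \<and> A \<noteq> {} \<and> h ` A = A \<longrightarrow> A = topspace X)"

definition eigenfunction :: "'a topology \<Rightarrow> ('a \<Rightarrow> 'a) \<Rightarrow> ('a \<Rightarrow> complex) \<Rightarrow> bool" where
  "eigenfunction X h chi \<longleftrightarrow> continuous_map X (top_of_set circleRZ) chi \<and>
     (\<exists>\<alpha>::real. \<forall>x\<in>topspace X. chi (h x) = rotRZ \<alpha> (chi x))"

end

theory Submission
  imports Defs
begin

text \<open>If \<open>chi\<close> misses a point of the circle, then after a rotation it avoids \<open>-1\<close>, so the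
  principal argument \<open>\<theta> = Arg \<circ> chi\<close> is a continuous lift with \<open>\<bar>\<theta>\<bar> \<le> pi\<close>. The eigenfunction
  equation puts the values of \<open>\<theta> \<circ> h - \<theta>\<close> into a single coset of \<open>2 pi \<int>\<close>, so this
  continuous function is a constant \<open>\<delta>\<close> on the connected space. Along an orbit \<open>\<theta>\<close> then
  grows like \<open>n \<delta>\<close> while staying bounded, hence \<open>\<delta> = 0\<close> and \<open>chi\<close> is \<open>h\<close>-invariant. Its level
  sets are then closed and invariant, so by minimality \<open>chi\<close> is constant.\<close>

lemma cis_eq_cis_imp_diff_int:
  assumes "cis a = cis b"
  shows "\<exists>k::int. a - b = 2 * pi * k"
proof -
  from assms obtain n :: int where "\<i> * of_real a = \<i> * of_real b + (of_int (2 * n) * pi) * \<i>"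
    by (auto simp: cis_conv_exp exp_eq)
  then have "\<i> * complex_of_real (a - b) = \<i> * complex_of_real (2 * pi * n)"
    by (simp add: algebra_simps)
  then have "complex_of_real (a - b) = complex_of_real (2 * pi * n)"
    by simp
  then show ?thesis
    by (metis of_real_eq_iff)
qed

lemma connected_space_cis_constant_imp_constant:
  assumes "connected_space X" and "continuous_map X euclideanreal f"
    and cis_f: "\<And>x. x \<in> topspace X \<Longrightarrow> cis (f x) = c"
    and "x \<in> topspace X" and "y \<in> topspace X"
  shows "f x = f y"
proof -
  have interval: "connected (f ` topspace X)"
    using connectedin_continuous_map_image[OF assms(2)] assms(1)
    by (simp add: connectedin_topspace)
  have "\<not> f u < f v" if u: "u \<in> topspace X" and v: "v \<in> topspace X" for u v
  proof
    assume less: "f u < f v"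
    obtain k :: int where k: "f v - f u = 2 * pi * k"
      using cis_eq_cis_imp_diff_int cis_f u v by metis
    then have "0 < 2 * pi * real_of_int k"
      using less by linarith
    then have "1 \<le> k"
      by (simp add: zero_less_mult_iff)
    then have "2 * pi * 1 \<le> 2 * pi * real_of_int k"
      by (intro mult_left_mono) auto
    then have "f u + pi \<le> f v"
      using k pi_gt_zero by linarith
    moreover have "f u \<le> f u + pi"
      using pi_gt_zero by linarith
    ultimately have "f u + pi \<in> f ` topspace X"
      using interval u v unfolding connected_iff_interval by blast
    then obtain w where w: "w \<in> topspace X" "f w = f u + pi"
      by auto
    \<comment> \<open>going half a turn changes the sign of \<open>cis\<close>, and \<open>c \<noteq> 0\<close>\<close>
    have "c = - c"
      using cis_f[OF w(1)] cis_f[OF u] by (simp add: w(2) flip: minus_cis)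
    then have "c = 0"
      by simp
    then show False
      using cis_f[OF u] cis_neq_zero by metis
  qed
  then show ?thesis
    using assms(4,5) by (meson linorder_neqE_linordered_idom)
qed

lemma bounded_translated_orbit_imp_zero:
  fixes \<theta> :: "'a \<Rightarrow> real"
  assumes "h ` S \<subseteq> S" and "x \<in> S"
    and shift: "\<And>y. y \<in> S \<Longrightarrow> \<theta> (h y) = \<theta> y + \<delta>"
    and bound: "\<And>y. y \<in> S \<Longrightarrow> \<bar>\<theta> y\<bar> \<le> B"
  shows "\<delta> = 0"
proof (rule ccontr)
  assume "\<delta> \<noteq> 0"
  have orbit: "(h ^^ n) x \<in> S \<and> \<theta> ((h ^^ n) x) = \<theta> x + n * \<delta>" for n
    by (induction n) (use assms in \<open>auto simp: algebra_simps\<close>)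
  obtain n :: nat where n: "n > 2 * B / \<bar>\<delta>\<bar>"
    using reals_Archimedean2 by blast
  have "\<bar>n * \<delta>\<bar> \<le> 2 * B"
    using orbit[of n] bound[of "(h ^^ n) x"] bound[OF \<open>x \<in> S\<close>] by linarith
  moreover have "n * \<bar>\<delta>\<bar> > 2 * B"
    using n \<open>\<delta> \<noteq> 0\<close> by (simp add: field_simps)
  ultimately show False
    using \<open>\<delta> \<noteq> 0\<close> by (simp add: abs_mult)
qed

lemma unit_complex_in_nonpos_Reals_iff:
  fixes u :: complex
  assumes "norm u = 1"
  shows "u \<in> \<real>\<^sub>\<le>\<^sub>0 \<longleftrightarrow> u = -1"
  using assms by (auto simp: nonpos_Reals_def intro!: exI[of _ "-1"])

lemma continuous_map_Arg:
  assumes "continuous_map X euclidean g" and "\<And>x. x \<in> topspace X \<Longrightarrow> g x \<notin> \<real>\<^sub>\<le>\<^sub>0"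
  shows "continuous_map X euclideanreal (\<lambda>x. Arg (g x))"
proof -
  have "continuous_map X (top_of_set (- \<real>\<^sub>\<le>\<^sub>0)) g"
    using assms by (auto simp: continuous_map_in_subtopology)
  moreover have "continuous_map (top_of_set (- \<real>\<^sub>\<le>\<^sub>0)) euclideanreal Arg"
    using continuous_on_Arg by simp
  ultimately have "continuous_map X euclideanreal (Arg \<circ> g)"
    by (rule continuous_map_compose)
  then show ?thesis
    by (simp add: o_def)
qed

lemma circle_map_omitting_point_continuous_argument:
  fixes g :: "'a \<Rightarrow> complex"
  assumes g_cont: "continuous_map X euclidean g"
    and g_unit: "\<And>x. x \<in> topspace X \<Longrightarrow> norm (g x) = 1"
    and "norm z = 1" and z_missed: "z \<notin> g ` topspace X"
  obtains \<theta> where "continuous_map X euclideanreal \<theta>"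
    and "\<And>x. x \<in> topspace X \<Longrightarrow> g x = - z * cis (\<theta> x)"
    and "\<And>x. \<bar>\<theta> x\<bar> \<le> pi"
proof -
  have z_cnj: "cnj z * z = 1"
    using \<open>norm z = 1\<close> by (metis complex_norm_square mult.commute of_real_1 power_one)
  \<comment> \<open>rotating \<open>z\<close> to \<open>-1\<close>, the principal argument becomes continuous\<close>
  define w where "w = (\<lambda>x. - cnj z * g x)"
  have w_unit: "norm (w x) = 1" if "x \<in> topspace X" for x
    using g_unit[OF that] \<open>norm z = 1\<close> by (simp add: w_def norm_mult)
  have "w x \<noteq> -1" if "x \<in> topspace X" for x
  proof
    assume "w x = -1"
    then have "g x = z"
      using z_cnj by (simp add: w_def) (metis mult.assoc mult.commute mult_1)
    then show False
      using z_missed that by blast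
  qed
  then have w_not_nonpos: "w x \<notin> \<real>\<^sub>\<le>\<^sub>0" if "x \<in> topspace X" for x
    using that w_unit unit_complex_in_nonpos_Reals_iff by blast
  have "continuous_map X euclidean w"
    using continuous_map_compose[OF g_cont, of euclidean "\<lambda>u. - cnj z * u"]
    unfolding w_def by (simp add: o_def continuous_intros)
  show ?thesis
  proof (rule that[of "\<lambda>x. Arg (w x)"])
    show "continuous_map X euclideanreal (\<lambda>x. Arg (w x))"
      using \<open>continuous_map X euclidean w\<close> w_not_nonpos by (rule continuous_map_Arg)
    show "g x = - z * cis (Arg (w x))" if "x \<in> topspace X" for x
    proof -
      have "- z * cis (Arg (w x)) = - z * w x"
        using w_unit[OF that] by (simp add: cis_conv_exp complex_norm_eq_1_exp_eq)
      also have "\<dots> = (cnj z * z) * g x"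
        by (simp add: w_def algebra_simps)
      finally show ?thesis
        using z_cnj by simp
    qed
    show "\<bar>Arg (w x)\<bar> \<le> pi" for x
      using mpi_less_Arg[of "w x"] Arg_le_pi[of "w x"] by linarith
  qed
qed

lemma equivariant_circle_map_omitting_point_invariant:
  fixes g :: "'a \<Rightarrow> complex"
  assumes "connected_space X" and h_cont: "continuous_map X X h"
    and g_cont: "continuous_map X euclidean g"
    and g_unit: "\<And>x. x \<in> topspace X \<Longrightarrow> norm (g x) = 1"
    and g_h: "\<And>x. x \<in> topspace X \<Longrightarrow> g (h x) = c * g x"
    and "norm z = 1" and "z \<notin> g ` topspace X"
    and x: "x \<in> topspace X"
  shows "g (h x) = g x"
proof -
  obtain \<theta> where \<theta>_cont: "continuous_map X euclideanreal \<theta>"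
    and g_\<theta>: "\<And>x. x \<in> topspace X \<Longrightarrow> g x = - z * cis (\<theta> x)"
    and \<theta>_bound: "\<And>x. \<bar>\<theta> x\<bar> \<le> pi"
    using circle_map_omitting_point_continuous_argument[OF g_cont g_unit assms(6,7)] by blast
  have h_in: "\<And>y. y \<in> topspace X \<Longrightarrow> h y \<in> topspace X"
    using continuous_map_image_subset_topspace[OF h_cont] by blast
  have "z \<noteq> 0"
    using \<open>norm z = 1\<close> by auto
  have cis_shift: "cis (\<theta> (h y) - \<theta> y) = c" if "y \<in> topspace X" for y
  proof -
    have "- z * cis (\<theta> (h y)) = g (h y)"
      using g_\<theta>[OF h_in[OF that]] by simp
    also have "\<dots> = c * g y"
      by (rule g_h[OF that])
    also have "\<dots> = - z * (c * cis (\<theta> y))"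
      using g_\<theta>[OF that] by (simp add: algebra_simps)
    finally have "cis (\<theta> (h y)) = c * cis (\<theta> y)"
      using \<open>z \<noteq> 0\<close> by simp
    then show ?thesis
      unfolding cis_divide[symmetric] by simp
  qed
  have shift_cont: "continuous_map X euclideanreal (\<lambda>y. \<theta> (h y) - \<theta> y)"
    using continuous_map_compose[OF h_cont \<theta>_cont] \<theta>_cont
    by (intro continuous_intros) (simp_all add: o_def)
  define \<delta> where "\<delta> = \<theta> (h x) - \<theta> x"
  have shift: "\<theta> (h y) = \<theta> y + \<delta>" if "y \<in> topspace X" for y
    using connected_space_cis_constant_imp_constant[OF assms(1) shift_cont cis_shift that x]
    by (simp add: \<delta>_def)
  have "\<delta> = 0"
    using bounded_translated_orbit_imp_zero[of h "topspace X" x \<theta> \<delta> pi] h_in x shift \<theta>_bound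
    by blast
  then show ?thesis
    using g_\<theta>[OF x] g_\<theta>[OF h_in[OF x]] shift[OF x] by simp
qed

lemma minimal_homeo_invariant_map_constant:
  assumes "minimal_homeo X h" and "continuous_map X Y g" and "t1_space Y"
    and invariant: "\<And>x. x \<in> topspace X \<Longrightarrow> g (h x) = g x"
    and x: "x \<in> topspace X" and "y \<in> topspace X"
  shows "g y = g x"
proof -
  define A where "A = {z \<in> topspace X. g z \<in> {g x}}"
  have "g x \<in> topspace Y"
    using continuous_map_image_subset_topspace[OF assms(2)] x by blast
  then have "closedin X A"
    unfolding A_def using assms(2,3) by (intro closedin_continuous_map_preimage closedin_t1_singleton)
  moreover have "A \<noteq> {}"
    using x by (auto simp: A_def)
  moreover have "h ` A = A"
  proof
    have surj: "h ` topspace X = topspace X"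
      using assms(1) homeomorphic_imp_surjective_map[of X X h] by (simp add: minimal_homeo_def)
    show "h ` A \<subseteq> A"
      using surj invariant by (auto simp: A_def)
    show "A \<subseteq> h ` A"
    proof
      fix y
      assume "y \<in> A"
      then obtain u where "u \<in> topspace X" "y = h u"
        using surj by (auto simp: A_def)
      with \<open>y \<in> A\<close> show "y \<in> h ` A"
        using invariant by (auto simp: A_def)
    qed
  qed
  ultimately have "A = topspace X"
    using assms(1) by (simp add: minimal_homeo_def)
  then show ?thesis
    using \<open>y \<in> topspace X\<close> by (auto simp: A_def)
qed

theorem lemma5p2:
  fixes X :: "'a topology" and h :: "'a \<Rightarrow> 'a" and chi :: "'a \<Rightarrow> complex"
  assumes "compact_space X" and "connected_space X" and "Hausdorff_space X"
    and "minimal_homeo X h"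
    and "eigenfunction X h chi"
    and "\<exists>x\<in>topspace X. \<exists>y\<in>topspace X. chi x \<noteq> chi y"
  shows "chi ` topspace X = circleRZ"
proof (rule ccontr)
  assume not_onto: "chi ` topspace X \<noteq> circleRZ"
  obtain \<alpha> where chi_circle: "continuous_map X (top_of_set circleRZ) chi"
    and chi_h: "\<And>x. x \<in> topspace X \<Longrightarrow> chi (h x) = cis (2 * pi * \<alpha>) * chi x"
    using assms(5) by (auto simp: eigenfunction_def rotRZ_def)
  have chi_cont: "continuous_map X euclidean chi" and chi_image: "chi ` topspace X \<subseteq> circleRZ"
    using chi_circle by (auto simp: continuous_map_in_subtopology)
  then have chi_unit: "\<And>x. x \<in> topspace X \<Longrightarrow> norm (chi x) = 1"
    by (auto simp: circleRZ_def)
  obtain z where "z \<in> circleRZ" and z_missed: "z \<notin> chi ` topspace X"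
    using not_onto chi_image by blast
  then have "norm z = 1"
    by (simp add: circleRZ_def)
  have h_cont: "continuous_map X X h"
    using assms(4) homeomorphic_imp_continuous_map by (auto simp: minimal_homeo_def)
  have chi_invariant: "chi (h x) = chi x" if "x \<in> topspace X" for x
    using equivariant_circle_map_omitting_point_invariant
      [OF assms(2) h_cont chi_cont chi_unit chi_h \<open>norm z = 1\<close> z_missed that] .
  obtain x y where x: "x \<in> topspace X" and y: "y \<in> topspace X" and "chi x \<noteq> chi y"
    using assms(6) by blast
  moreover have "chi y = chi x"
    by (rule minimal_homeo_invariant_map_constant[OF assms(4) chi_cont t1_space_euclidean])
      (use chi_invariant x y in auto)
  ultimately show False
    by simp
qed

end
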